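(* Let $G$ be a large scale group having a basis $\{G_i\}_{i\ge1}$ for boundedly generated subgroups consisting of unbounded subgroups. If $m\le\infty$ and each $G_i$ (with the large scale structure induced from $G$) has at most $m$ ends, then $G$ has at most $m$ ends.
   Context: A large scale group is a group $G$ with a bornology $\mathcal B$ (a cover closed under subsets and finite unions) closed under inverses and products; uniformly bounded covers are those refining $\{gB\}_{g\in G}$ for some $B\in\mathcal B$; bounded sets are members of $\mathcal B$. A subgroup $H$ carries the induced large scale group structure with bornology $\{B\in\mathcal B: B\subseteq H\}$. $G$ (or a subgroup) is boundedly generated if it is generated by a bounded symmetric set. A basis for boundedly generated subgroups of $G$ is a sequence $\{G_i\}_{i\ge1}$ of boundedly generated subgroups of $G$ such that every bounded subset of $G$ is contained in some $G_i$ (equivalently, every boundedly generated subgroup lies in some $G_i$). For $A\subseteq G$ and a cover $\mathcal U$, $st(A,\mathcal U)$ is the union of members of $\mathcal U$ meeting $A$; $A$ is coarsely clopen if $st(A,\mathcal U)\cap st(G\setminus A,\mathcal U)$ is bounded for every uniformly bounded $\mathcal U$. An end is a family of unbounded coarsely clopen sets maximal with respect to all finite intersections being unbounded; the number of ends is the cardinality of the set of ends. *)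

theory Defs
  imports "HOL-Algebra.Algebra" "HOL-Library.Extended_Nat"
begin

definition bornology :: "'a set \<Rightarrow> 'a set set \<Rightarrow> bool" where
  "bornology S Bor \<longleftrightarrow> (\<forall>B\<in>Bor. B \<subseteq> S) \<and> \<Union>Bor = S \<and>
     (\<forall>B\<in>Bor. \<forall>C. C \<subseteq> B \<longrightarrow> C \<in> Bor) \<and>
     (\<forall>B\<in>Bor. \<forall>C\<in>Bor. B \<union> C \<in> Bor)"

definition large_scale_group :: "('a, 'b) monoid_scheme \<Rightarrow> 'a set set \<Rightarrow> bool" where
  "large_scale_group G Bor \<longleftrightarrow> group G \<and> bornology (carrier G) Bor \<and>
     (\<forall>B\<in>Bor. set_inv\<^bsub>G\<^esub> B \<in> Bor) \<and>
     (\<forall>B\<in>Bor. \<forall>C\<in>Bor. B <#>\<^bsub>G\<^esub> C \<in> Bor)"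

text \<open>Induced large scale structure on a subgroup H.\<close>
definition induced_bornology :: "'a set set \<Rightarrow> 'a set \<Rightarrow> 'a set set" where
  "induced_bornology Bor H = {B \<in> Bor. B \<subseteq> H}"

definition unif_bounded :: "('a, 'b) monoid_scheme \<Rightarrow> 'a set set \<Rightarrow> 'a set set \<Rightarrow> bool" where
  "unif_bounded G Bor Us \<longleftrightarrow> (\<forall>U\<in>Us. U \<subseteq> carrier G) \<and> \<Union>Us = carrier G \<and>
     (\<exists>B\<in>Bor. \<forall>U\<in>Us. \<exists>g\<in>carrier G. U \<subseteq> g <#\<^bsub>G\<^esub> B)"

definition star :: "'a set \<Rightarrow> 'a set set \<Rightarrow> 'a set" where
  "star A Us = \<Union>{U \<in> Us. U \<inter> A \<noteq> {}}"

definition coarsely_clopen :: "('a, 'b) monoid_scheme \<Rightarrow> 'a set set \<Rightarrow> 'a set \<Rightarrow> bool" where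
  "coarsely_clopen G Bor A \<longleftrightarrow> A \<subseteq> carrier G \<and>
     (\<forall>Us. unif_bounded G Bor Us \<longrightarrow> star A Us \<inter> star (carrier G - A) Us \<in> Bor)"

definition fin_int_unbounded :: "'a set \<Rightarrow> 'a set set \<Rightarrow> 'a set set \<Rightarrow> bool" where
  "fin_int_unbounded S Bor Es \<longleftrightarrow>
     (\<forall>Fs. Fs \<subseteq> Es \<and> finite Fs \<longrightarrow> S \<inter> \<Inter>Fs \<notin> Bor)"

definition is_end :: "('a, 'b) monoid_scheme \<Rightarrow> 'a set set \<Rightarrow> 'a set set \<Rightarrow> bool" where
  "is_end G Bor Es \<longleftrightarrow>
     (\<forall>A\<in>Es. coarsely_clopen G Bor A \<and> A \<notin> Bor) \<and>
     fin_int_unbounded (carrier G) Bor Es \<and>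
     (\<forall>Es'. Es \<subseteq> Es' \<and> (\<forall>A\<in>Es'. coarsely_clopen G Bor A \<and> A \<notin> Bor) \<and>
        fin_int_unbounded (carrier G) Bor Es' \<longrightarrow> Es' = Es)"

definition ends :: "('a, 'b) monoid_scheme \<Rightarrow> 'a set set \<Rightarrow> 'a set set set" where
  "ends G Bor = {Es. is_end G Bor Es}"

definition num_ends :: "('a, 'b) monoid_scheme \<Rightarrow> 'a set set \<Rightarrow> enat" where
  "num_ends G Bor = (if finite (ends G Bor) then enat (card (ends G Bor)) else \<infinity>)"

definition boundedly_generated :: "('a, 'b) monoid_scheme \<Rightarrow> 'a set set \<Rightarrow> 'a set \<Rightarrow> bool" where
  "boundedly_generated G Bor H \<longleftrightarrow> subgroup H G \<and>
     (\<exists>S\<in>Bor. set_inv\<^bsub>G\<^esub> S = S \<and> generate G S = H)"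

definition bg_basis :: "('a, 'b) monoid_scheme \<Rightarrow> 'a set set \<Rightarrow> (nat \<Rightarrow> 'a set) \<Rightarrow> bool" where
  "bg_basis G Bor Gs \<longleftrightarrow> (\<forall>i\<ge>1. boundedly_generated G Bor (Gs i)) \<and>
     (\<forall>B\<in>Bor. \<exists>i\<ge>1. B \<subseteq> Gs i)"

end

(*
  Distinct ends E_1, ..., E_n of G are separated pairwise by finite subfamilies with bounded
  intersection, so intersecting finitely many members of each E_i gives unbounded coarsely clopen
  sets C_1, ..., C_n with pairwise bounded intersections.

  Each unbounded coarsely clopen C meets some G_j in an unbounded set. Let S be a bounded symmetric
  generating set of G_1. The points of C that right multiplication by S moves out of C form a
  bounded set, contained in some G_k. If C is not inside G_k, pick g in C outside G_k; moving by
  elements of G_1 (which lies in G_k) never reaches G_k, so g G_1 lies in C. For j with g in G_j and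
  G_1 inside G_j, the unbounded set g G_1 lies in C meet G_j.

  As the basis is directed, one G_j serves all C_i at once, and the sets C_i meet G_j are n unbounded
  coarsely clopen subsets of G_j with pairwise bounded intersections; they lie in n distinct ends
  of G_j.
*)
theory Submission
  imports Defs
begin

lemma bornology_subset: "bornology S Bor \<Longrightarrow> B \<in> Bor \<Longrightarrow> C \<subseteq> B \<Longrightarrow> C \<in> Bor"
  unfolding bornology_def by blast

lemma bornology_Un: "bornology S Bor \<Longrightarrow> B \<in> Bor \<Longrightarrow> C \<in> Bor \<Longrightarrow> B \<union> C \<in> Bor"
  unfolding bornology_def by blast

lemma bornology_singleton: "bornology S Bor \<Longrightarrow> x \<in> S \<Longrightarrow> {x} \<in> Bor"
  unfolding bornology_def by blast

lemma bornology_empty: "bornology S Bor \<Longrightarrow> x \<in> S \<Longrightarrow> {} \<in> Bor"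
  unfolding bornology_def by blast

lemma bornology_subset_space: "bornology S Bor \<Longrightarrow> B \<in> Bor \<Longrightarrow> B \<subseteq> S"
  unfolding bornology_def by blast

lemma bornology_induced:
  assumes "bornology S Bor" and "H \<subseteq> S"
  shows "bornology H (induced_bornology Bor H)"
  unfolding bornology_def induced_bornology_def
proof (intro conjI)
  show "\<Union>{B \<in> Bor. B \<subseteq> H} = H"
    using bornology_singleton[OF assms(1)] assms(2) by blast
qed (use assms(1) in \<open>auto simp: bornology_def\<close>)

lemma coarsely_clopen_Int:
  assumes bor: "bornology (carrier G) Bor"
    and A: "coarsely_clopen G Bor A" and B: "coarsely_clopen G Bor B"
  shows "coarsely_clopen G Bor (A \<inter> B)"
  unfolding coarsely_clopen_def
proof (intro conjI allI impI)
  show "A \<inter> B \<subseteq> carrier G" using A unfolding coarsely_clopen_def by blast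
  fix Us assume Us: "unif_bounded G Bor Us"
  have "star (A \<inter> B) Us \<inter> star (carrier G - A \<inter> B) Us \<subseteq>
     (star A Us \<inter> star (carrier G - A) Us) \<union> (star B Us \<inter> star (carrier G - B) Us)"
    unfolding star_def by blast
  moreover have "(star A Us \<inter> star (carrier G - A) Us) \<union> (star B Us \<inter> star (carrier G - B) Us) \<in> Bor"
    using A B Us bornology_Un[OF bor] unfolding coarsely_clopen_def by blast
  ultimately show "star (A \<inter> B) Us \<inter> star (carrier G - A \<inter> B) Us \<in> Bor"
    using bornology_subset[OF bor] by blast
qed

lemma coarsely_clopen_carrier:
  assumes "bornology (carrier G) Bor" and "carrier G \<noteq> {}"
  shows "coarsely_clopen G Bor (carrier G)"
proof -
  have "{} \<in> Bor" using assms bornology_empty by (metis ex_in_conv)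
  moreover have "star (carrier G - carrier G) Us = {}" for Us unfolding star_def by blast
  ultimately show ?thesis unfolding coarsely_clopen_def by simp
qed

lemma coarsely_clopen_carrier_Inter:
  assumes bor: "bornology (carrier G) Bor" and ne: "carrier G \<noteq> {}"
    and "finite F" and "\<forall>A\<in>F. coarsely_clopen G Bor A"
  shows "coarsely_clopen G Bor (carrier G \<inter> \<Inter>F)"
  using assms(3,4)
proof (induction F rule: finite_induct)
  case empty
  then show ?case using coarsely_clopen_carrier[OF bor ne] by simp
next
  case (insert A F)
  then have "A \<subseteq> carrier G" unfolding coarsely_clopen_def by blast
  then have "carrier G \<inter> \<Inter>(insert A F) = A \<inter> (carrier G \<inter> \<Inter>F)" by blast
  then show ?case using coarsely_clopen_Int[OF bor] insert by simp
qed

lemma fin_int_unbounded_chain_Union: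
  assumes "subset.chain Fams Ch" and "Ch \<noteq> {}"
    and "\<forall>Es\<in>Ch. fin_int_unbounded S Bor Es"
  shows "fin_int_unbounded S Bor (\<Union>Ch)"
  unfolding fin_int_unbounded_def
proof (intro allI impI)
  fix Fs assume "Fs \<subseteq> \<Union>Ch \<and> finite Fs"
  then obtain Es where "Es \<in> Ch" "Fs \<subseteq> Es" "finite Fs"
    using finite_subset_Union_chain[OF _ _ assms(2,1)] by metis
  then show "S \<inter> \<Inter>Fs \<notin> Bor" using assms(3) unfolding fin_int_unbounded_def by blast
qed

lemma is_end_extends:
  assumes "\<forall>A\<in>R. coarsely_clopen G Bor A \<and> A \<notin> Bor"
    and "fin_int_unbounded (carrier G) Bor R"
  obtains E where "is_end G Bor E" and "R \<subseteq> E"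
proof -
  define Fams where "Fams = {Es. R \<subseteq> Es \<and> (\<forall>A\<in>Es. coarsely_clopen G Bor A \<and> A \<notin> Bor) \<and>
      fin_int_unbounded (carrier G) Bor Es}"
  have "\<exists>E\<in>Fams. \<forall>Es\<in>Fams. E \<subseteq> Es \<longrightarrow> Es = E"
  proof (rule subset_Zorn)
    fix Ch assume ch: "subset.chain Fams Ch"
    show "\<exists>U\<in>Fams. \<forall>Es\<in>Ch. Es \<subseteq> U"
    proof (cases "Ch = {}")
      case True
      then show ?thesis using assms unfolding Fams_def by blast
    next
      case False
      have "Ch \<subseteq> Fams" using ch unfolding subset_chain_def by blast
      then have "\<Union>Ch \<in> Fams"
        using False fin_int_unbounded_chain_Union[OF ch False] unfolding Fams_def by blast
      then show ?thesis by blast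
    qed
  qed
  then obtain E where E: "E \<in> Fams" and max: "\<forall>Es\<in>Fams. E \<subseteq> Es \<longrightarrow> Es = E" by blast
  have "is_end G Bor E"
    unfolding is_end_def
  proof (intro conjI allI impI)
    show "\<forall>A\<in>E. coarsely_clopen G Bor A \<and> A \<notin> Bor"
      and "fin_int_unbounded (carrier G) Bor E" using E unfolding Fams_def by simp_all
    fix Es assume Es: "E \<subseteq> Es \<and> (\<forall>A\<in>Es. coarsely_clopen G Bor A \<and> A \<notin> Bor) \<and>
        fin_int_unbounded (carrier G) Bor Es"
    have "R \<subseteq> Es" using E Es unfolding Fams_def by blast
    with Es have "Es \<in> Fams" unfolding Fams_def by blast
    with max Es show "Es = E" by blast
  qed
  moreover have "R \<subseteq> E" using E unfolding Fams_def by simp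
  ultimately show ?thesis by (rule that)
qed

lemma is_end_maximal:
  assumes "is_end G Bor E" and "E \<subseteq> Es" and "\<forall>A\<in>Es. coarsely_clopen G Bor A \<and> A \<notin> Bor"
    and "fin_int_unbounded (carrier G) Bor Es"
  shows "Es = E"
  using assms unfolding is_end_def by (elim conjE allE) (erule mp, intro conjI)

lemma distinct_ends_separated:
  assumes bor: "bornology (carrier G) Bor"
    and E: "is_end G Bor E" and E': "is_end G Bor E'" and "E \<noteq> E'"
  obtains F F' where "finite F" "F \<subseteq> E" "finite F'" "F' \<subseteq> E'"
    and "carrier G \<inter> \<Inter>F \<inter> \<Inter>F' \<in> Bor"
proof -
  have props: "\<forall>A\<in>E. coarsely_clopen G Bor A \<and> A \<notin> Bor"
    "\<forall>A\<in>E'. coarsely_clopen G Bor A \<and> A \<notin> Bor"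
    "fin_int_unbounded (carrier G) Bor E"
    using E E' unfolding is_end_def by simp_all
  have "\<not> E \<subseteq> E'"
  proof
    assume "E \<subseteq> E'"
    then have "E' = E" using is_end_maximal[OF E _ props(2)] E' unfolding is_end_def by simp
    then show False using \<open>E \<noteq> E'\<close> by simp
  qed
  then obtain A where A: "A \<in> E" "A \<notin> E'" by blast
  have "\<forall>B\<in>insert A E'. coarsely_clopen G Bor B \<and> B \<notin> Bor"
    using props A by simp
  then have "\<not> fin_int_unbounded (carrier G) Bor (insert A E')"
    using is_end_maximal[OF E', of "insert A E'"] A by blast
  then obtain Fs where Fs: "Fs \<subseteq> insert A E'" "finite Fs" "carrier G \<inter> \<Inter>Fs \<in> Bor"
    unfolding fin_int_unbounded_def by blast
  have "carrier G \<inter> \<Inter>{A} \<inter> \<Inter>(Fs - {A}) \<subseteq> carrier G \<inter> \<Inter>Fs" by blast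
  then have "carrier G \<inter> \<Inter>{A} \<inter> \<Inter>(Fs - {A}) \<in> Bor"
    by (rule bornology_subset[OF bor Fs(3)])
  with A Fs show ?thesis by (intro that[of "{A}" "Fs - {A}"]) auto
qed

lemma (in group) unif_bounded_l_cosets:
  assumes bor: "bornology (carrier G) Bor" and "B \<in> Bor" and "\<one> \<in> B"
  shows "unif_bounded G Bor ((\<lambda>g. g <# B) ` carrier G)"
proof -
  have "B \<subseteq> carrier G" using bornology_subset_space[OF bor \<open>B \<in> Bor\<close>] .
  then have "g <# B \<subseteq> carrier G" if "g \<in> carrier G" for g
    using l_coset_subset_G that by blast
  moreover have "g \<in> g <# B" if "g \<in> carrier G" for g
    using \<open>\<one> \<in> B\<close> that unfolding l_coset_def by force
  ultimately show ?thesis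
    using \<open>B \<in> Bor\<close> unfolding unif_bounded_def by blast
qed

lemma (in group) coarsely_clopen_boundary_bounded:
  assumes bor: "bornology (carrier G) Bor" and C: "coarsely_clopen G Bor C" and S: "S \<in> Bor"
  shows "{x \<in> C. \<exists>s\<in>S. x \<otimes> s \<notin> C} \<in> Bor"
proof -
  define B where "B = insert \<one> S"
  have "B \<in> Bor"
    using bornology_Un[OF bor bornology_singleton[OF bor one_closed] S] unfolding B_def by simp
  define Us where "Us = (\<lambda>g. g <# B) ` carrier G"
  have "star C Us \<inter> star (carrier G - C) Us \<in> Bor"
    using C unif_bounded_l_cosets[OF bor \<open>B \<in> Bor\<close>] unfolding coarsely_clopen_def Us_def B_def
    by blast
  moreover have "{x \<in> C. \<exists>s\<in>S. x \<otimes> s \<notin> C} \<subseteq> star C Us \<inter> star (carrier G - C) Us"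
  proof
    fix x assume "x \<in> {x \<in> C. \<exists>s\<in>S. x \<otimes> s \<notin> C}"
    then obtain s where x: "x \<in> C" and s: "s \<in> S" "x \<otimes> s \<notin> C" by blast
    have "x \<in> carrier G" "s \<in> carrier G"
      using x s C bornology_subset_space[OF bor S] unfolding coarsely_clopen_def by auto
    moreover have "x \<in> x <# B" "x \<otimes> s \<in> x <# B"
      using \<open>x \<in> carrier G\<close> s unfolding l_coset_def B_def by force+
    ultimately show "x \<in> star C Us \<inter> star (carrier G - C) Us"
      using x s unfolding star_def Us_def by blast
  qed
  ultimately show ?thesis using bornology_subset[OF bor] by blast
qed

lemma (in group) right_mult_generate_preserves_Diff:
  assumes K: "subgroup K G" and "generate G S \<subseteq> K" and "set_inv S = S"
    and "C \<subseteq> carrier G" and step: "\<And>x s. x \<in> C - K \<Longrightarrow> s \<in> S \<Longrightarrow> x \<otimes> s \<in> C"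
    and "h \<in> generate G S" and "x \<in> C - K"
  shows "x \<otimes> h \<in> C - K"
proof -
  have outside: "y \<otimes> k \<notin> K" if "y \<in> carrier G" "y \<notin> K" "k \<in> K" for y k
  proof
    assume "y \<otimes> k \<in> K"
    then have "y \<otimes> k \<otimes> inv k \<in> K"
      using K \<open>k \<in> K\<close> by (simp add: subgroup.m_closed subgroup.m_inv_closed)
    then show False
      using that subgroup.mem_carrier[OF K] by (simp add: m_assoc)
  qed
  have step': "x \<otimes> s \<in> C - K" if "x \<in> C - K" "s \<in> S" for x s
  proof -
    have "s \<in> K" using assms(2) generate.incl[OF \<open>s \<in> S\<close>] by blast
    then show ?thesis using step[OF that] outside[of x s] that \<open>C \<subseteq> carrier G\<close> by blast
  qed
  show ?thesis
    using \<open>h \<in> generate G S\<close> \<open>x \<in> C - K\<close>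
  proof (induction h arbitrary: x rule: generate.induct)
    case one
    then show ?case using \<open>C \<subseteq> carrier G\<close> by auto
  next
    case (incl s)
    then show ?case by (rule step'[rotated])
  next
    case (inv s)
    then have "inv s \<in> S" using \<open>set_inv S = S\<close> unfolding SET_INV_def by blast
    with inv.prems show ?case by (rule step')
  next
    case (eng h1 h2)
    have "h1 \<in> carrier G" "h2 \<in> carrier G"
      using eng.hyps assms(2) subgroup.mem_carrier[OF K] by blast+
    moreover have "x \<in> carrier G" using eng.prems \<open>C \<subseteq> carrier G\<close> by blast
    moreover have "x \<otimes> h1 \<otimes> h2 \<in> C - K" using eng.IH eng.prems by blast
    ultimately show ?case by (simp add: m_assoc)
  qed
qed

lemma bg_basis_generator:
  assumes "bg_basis G Bor Gs" and "i \<ge> 1"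
  obtains S where "S \<in> Bor" "set_inv\<^bsub>G\<^esub> S = S" "generate G S = Gs i"
  using assms unfolding bg_basis_def boundedly_generated_def by blast

lemma bg_basis_subgroup: "bg_basis G Bor Gs \<Longrightarrow> i \<ge> 1 \<Longrightarrow> subgroup (Gs i) G"
  unfolding bg_basis_def boundedly_generated_def by blast

lemma (in group) bg_basis_upper_bound:
  assumes bor: "bornology (carrier G) Bor" and bas: "bg_basis G Bor Gs"
    and "B \<in> Bor" and "i \<ge> 1"
  obtains k where "k \<ge> 1" "B \<subseteq> Gs k" "Gs i \<subseteq> Gs k"
proof -
  obtain S where S: "S \<in> Bor" "generate G S = Gs i"
    using bg_basis_generator[OF bas \<open>i \<ge> 1\<close>] by blast
  obtain k where k: "k \<ge> 1" "B \<union> S \<subseteq> Gs k"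
    using bas bornology_Un[OF bor \<open>B \<in> Bor\<close> S(1)] unfolding bg_basis_def by blast
  have "Gs i \<subseteq> Gs k"
    using generate_subgroup_incl[OF _ bg_basis_subgroup[OF bas k(1)]] k(2) S(2) by blast
  with k show ?thesis using that by blast
qed

lemma (in group) bg_basis_directed:
  assumes bor: "bornology (carrier G) Bor" and bas: "bg_basis G Bor Gs"
    and "i \<ge> 1" and "j \<ge> 1"
  obtains k where "k \<ge> 1" "Gs i \<subseteq> Gs k" "Gs j \<subseteq> Gs k"
proof -
  obtain S where S: "S \<in> Bor" "generate G S = Gs j"
    using bg_basis_generator[OF bas \<open>j \<ge> 1\<close>] by blast
  obtain k where k: "k \<ge> 1" "S \<subseteq> Gs k" "Gs i \<subseteq> Gs k"
    using bg_basis_upper_bound[OF bor bas S(1) \<open>i \<ge> 1\<close>] by blast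
  have "Gs j \<subseteq> Gs k"
    using generate_subgroup_incl[OF k(2) bg_basis_subgroup[OF bas k(1)]] S(2) by simp
  with k show ?thesis using that by blast
qed

lemma (in group) bg_basis_unbounded_Int:
  assumes lsg: "large_scale_group G Bor" and bas: "bg_basis G Bor Gs" and unb: "Gs 1 \<notin> Bor"
    and C: "coarsely_clopen G Bor C" and "C \<notin> Bor"
  obtains j where "j \<ge> 1" "C \<inter> Gs j \<notin> Bor"
proof -
  have bor: "bornology (carrier G) Bor" using lsg unfolding large_scale_group_def by blast
  have Cc: "C \<subseteq> carrier G" using C unfolding coarsely_clopen_def by blast
  have G1c: "Gs 1 \<subseteq> carrier G" using subgroup.subset[OF bg_basis_subgroup[OF bas]] by simp
  obtain S where S: "S \<in> Bor" "set_inv S = S" "generate G S = Gs 1"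
    using bg_basis_generator[OF bas] by blast
  obtain k where k: "k \<ge> 1" "{x \<in> C. \<exists>s\<in>S. x \<otimes> s \<notin> C} \<subseteq> Gs k" "Gs 1 \<subseteq> Gs k"
    using bg_basis_upper_bound[OF bor bas coarsely_clopen_boundary_bounded[OF bor C S(1)]] by auto
  show ?thesis
  proof (cases "C \<subseteq> Gs k")
    case True
    then have "C \<inter> Gs k = C" by blast
    then show ?thesis using that k(1) \<open>C \<notin> Bor\<close> by simp
  next
    case False
    then obtain g where g: "g \<in> C - Gs k" by blast
    then have gc: "g \<in> carrier G" using Cc by blast
    have step: "x \<otimes> s \<in> C" if "x \<in> C - Gs k" "s \<in> S" for x s
      using that k(2) by blast
    have gC: "g \<otimes> h \<in> C" if "h \<in> Gs 1" for h
      using right_mult_generate_preserves_Diff[OF bg_basis_subgroup[OF bas k(1)] _ S(2) Cc step]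
        S(3) k(3) that g by blast
    obtain j where j: "j \<ge> 1" "{g} \<subseteq> Gs j" "Gs 1 \<subseteq> Gs j"
      using bg_basis_upper_bound[OF bor bas bornology_singleton[OF bor gc]] by auto
    have "C \<inter> Gs j \<notin> Bor"
    proof
      assume "C \<inter> Gs j \<in> Bor"
      then have "{inv g} <#> (C \<inter> Gs j) \<in> Bor"
        using lsg bornology_singleton[OF bor inv_closed[OF gc]]
        unfolding large_scale_group_def by blast
      moreover have "Gs 1 \<subseteq> {inv g} <#> (C \<inter> Gs j)"
      proof
        fix h assume h: "h \<in> Gs 1"
        then have "g \<otimes> h \<in> C \<inter> Gs j"
          using gC j subgroup.m_closed[OF bg_basis_subgroup[OF bas j(1)]] by blast
        moreover have "inv g \<otimes> (g \<otimes> h) = h"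
          using gc h G1c by (simp add: subsetD m_assoc[symmetric])
        ultimately show "h \<in> {inv g} <#> (C \<inter> Gs j)"
          unfolding set_mult_def by force
      qed
      ultimately show False using unb bornology_subset[OF bor] by blast
    qed
    then show ?thesis using that j(1) by blast
  qed
qed

lemma (in group) bg_basis_unbounded_Int_finite:
  assumes lsg: "large_scale_group G Bor" and bas: "bg_basis G Bor Gs" and unb: "Gs 1 \<notin> Bor"
    and "finite Cs" and "\<forall>C\<in>Cs. coarsely_clopen G Bor C \<and> C \<notin> Bor"
  shows "\<exists>j\<ge>1. \<forall>C\<in>Cs. C \<inter> Gs j \<notin> Bor"
  using assms(4,5)
proof (induction Cs rule: finite_induct)
  case empty
  then show ?case by auto
next
  case (insert C Cs)
  have bor: "bornology (carrier G) Bor" using lsg unfolding large_scale_group_def by blast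
  obtain i where i: "i \<ge> 1" "\<forall>D\<in>Cs. D \<inter> Gs i \<notin> Bor" using insert by auto
  obtain j where j: "j \<ge> 1" "C \<inter> Gs j \<notin> Bor"
    using bg_basis_unbounded_Int[OF lsg bas unb] insert.prems by auto
  obtain k where k: "k \<ge> 1" "Gs i \<subseteq> Gs k" "Gs j \<subseteq> Gs k"
    using bg_basis_directed[OF bor bas i(1) j(1)] by blast
  have "D \<inter> Gs k \<notin> Bor" if "D \<inter> Gs l \<notin> Bor" "Gs l \<subseteq> Gs k" for D l
    using that bornology_subset[OF bor, of "D \<inter> Gs k" "D \<inter> Gs l"] by blast
  then show ?case using i j k by blast
qed

lemma (in group) unif_bounded_extend_from_subgroup:
  assumes bor: "bornology (carrier G) Bor" and H: "H \<subseteq> carrier G"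
    and Us: "unif_bounded (G\<lparr>carrier := H\<rparr>) (induced_bornology Bor H) Us"
  shows "unif_bounded G Bor (Us \<union> (\<lambda>x. {x}) ` (carrier G - H))"
proof -
  obtain B where B: "B \<in> Bor" "\<forall>U\<in>Us. \<exists>g\<in>H. U \<subseteq> g <# B"
    using Us unfolding unif_bounded_def induced_bornology_def l_coset_def by auto
  define B' where "B' = insert \<one> B"
  have "B' \<in> Bor"
    using bornology_Un[OF bor bornology_singleton[OF bor one_closed] B(1)] unfolding B'_def by simp
  have UH: "\<forall>U\<in>Us. U \<subseteq> H" and "\<Union>Us = H"
    using Us unfolding unif_bounded_def by auto
  have "\<exists>g\<in>carrier G. U \<subseteq> g <# B'" if "U \<in> Us \<union> (\<lambda>x. {x}) ` (carrier G - H)" for U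
    using that
  proof
    assume "U \<in> Us"
    then obtain g where "g \<in> H" "U \<subseteq> g <# B" using B(2) by blast
    moreover have "g <# B \<subseteq> g <# B'" unfolding l_coset_def B'_def by blast
    ultimately show ?thesis using H by blast
  next
    assume "U \<in> (\<lambda>x. {x}) ` (carrier G - H)"
    then obtain x where x: "x \<in> carrier G" "U = {x}" by blast
    moreover have "x \<in> x <# B'" unfolding l_coset_def B'_def using x by force
    ultimately show ?thesis by blast
  qed
  moreover have "\<Union>(Us \<union> (\<lambda>x. {x}) ` (carrier G - H)) = carrier G"
    using \<open>\<Union>Us = H\<close> H by auto
  moreover have "\<forall>U\<in>Us \<union> (\<lambda>x. {x}) ` (carrier G - H). U \<subseteq> carrier G"
    using UH H by auto
  ultimately show ?thesis
    using \<open>B' \<in> Bor\<close> unfolding unif_bounded_def by blast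
qed

lemma (in group) coarsely_clopen_restrict:
  assumes bor: "bornology (carrier G) Bor" and H: "H \<subseteq> carrier G"
    and A: "coarsely_clopen G Bor A"
  shows "coarsely_clopen (G\<lparr>carrier := H\<rparr>) (induced_bornology Bor H) (A \<inter> H)"
  unfolding coarsely_clopen_def
proof (intro conjI allI impI)
  show "A \<inter> H \<subseteq> carrier (G\<lparr>carrier := H\<rparr>)" by simp
  fix Us assume Us: "unif_bounded (G\<lparr>carrier := H\<rparr>) (induced_bornology Bor H) Us"
  then have UH: "\<forall>U\<in>Us. U \<subseteq> H" unfolding unif_bounded_def by simp
  define Us' where "Us' = Us \<union> (\<lambda>x. {x}) ` (carrier G - H)"
  have "star A Us' \<inter> star (carrier G - A) Us' \<in> Bor"
    using A unif_bounded_extend_from_subgroup[OF bor H Us] unfolding coarsely_clopen_def Us'_def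
    by blast
  moreover have "star (A \<inter> H) Us \<inter> star (H - A \<inter> H) Us
      \<subseteq> H \<inter> (star A Us' \<inter> star (carrier G - A) Us')"
    using UH H unfolding star_def Us'_def by blast
  ultimately show "star (A \<inter> H) Us \<inter> star (carrier (G\<lparr>carrier := H\<rparr>) - A \<inter> H) Us
      \<in> induced_bornology Bor H"
    using bornology_subset[OF bor] unfolding induced_bornology_def by auto
qed

definition coarsely_disjoint_family ::
    "('a, 'b) monoid_scheme \<Rightarrow> 'a set set \<Rightarrow> 'i set \<Rightarrow> ('i \<Rightarrow> 'a set) \<Rightarrow> bool" where
  "coarsely_disjoint_family G Bor I C \<longleftrightarrow>
     (\<forall>i\<in>I. coarsely_clopen G Bor (C i) \<and> C i \<notin> Bor) \<and>
     (\<forall>i\<in>I. \<forall>j\<in>I. i \<noteq> j \<longrightarrow> C i \<inter> C j \<in> Bor)"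

lemma ends_coarsely_disjoint_family:
  assumes bor: "bornology (carrier G) Bor" and ne: "carrier G \<noteq> {}"
    and "finite Fe" and "Fe \<subseteq> ends G Bor"
  obtains C where "coarsely_disjoint_family G Bor Fe C"
proof -
  have isend: "is_end G Bor E" if "E \<in> Fe" for E using assms(4) that unfolding ends_def by auto
  have "\<exists>Fa Fb. finite Fa \<and> Fa \<subseteq> E \<and> finite Fb \<and> Fb \<subseteq> E' \<and>
      carrier G \<inter> \<Inter>Fa \<inter> \<Inter>Fb \<in> Bor" if "E \<in> Fe" "E' \<in> Fe" "E \<noteq> E'" for E E'
    by (rule distinct_ends_separated[OF bor isend[OF that(1)] isend[OF that(2)] that(3)]) blast
  then obtain F F' where sep: "\<And>E E'. E \<in> Fe \<Longrightarrow> E' \<in> Fe \<Longrightarrow> E \<noteq> E' \<Longrightarrow>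
      finite (F E E') \<and> F E E' \<subseteq> E \<and> finite (F' E E') \<and> F' E E' \<subseteq> E' \<and>
      carrier G \<inter> \<Inter>(F E E') \<inter> \<Inter>(F' E E') \<in> Bor"
    by metis
  define A where "A E = (\<Union>E'\<in>Fe - {E}. F E E' \<union> F' E' E)" for E
  have A: "finite (A E)" "A E \<subseteq> E" if "E \<in> Fe" for E
    using sep that \<open>finite Fe\<close> unfolding A_def by auto
  define C where "C E = carrier G \<inter> \<Inter>(A E)" for E
  have "coarsely_disjoint_family G Bor Fe C"
    unfolding coarsely_disjoint_family_def
  proof (intro conjI ballI impI)
    fix E assume "E \<in> Fe"
    have "\<forall>B\<in>E. coarsely_clopen G Bor B" and unb: "fin_int_unbounded (carrier G) Bor E"
      using isend[OF \<open>E \<in> Fe\<close>] unfolding is_end_def by simp_all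
    then have "\<forall>B\<in>A E. coarsely_clopen G Bor B" using A[OF \<open>E \<in> Fe\<close>] by blast
    then show "coarsely_clopen G Bor (C E)"
      unfolding C_def by (rule coarsely_clopen_carrier_Inter[OF bor ne A(1)[OF \<open>E \<in> Fe\<close>]])
    show "C E \<notin> Bor"
      using unb A[OF \<open>E \<in> Fe\<close>] unfolding C_def fin_int_unbounded_def by blast
  next
    fix E E' assume E: "E \<in> Fe" "E' \<in> Fe" "E \<noteq> E'"
    have "F E E' \<subseteq> A E" "F' E E' \<subseteq> A E'" unfolding A_def using E by blast+
    then have "C E \<inter> C E' \<subseteq> carrier G \<inter> \<Inter>(F E E') \<inter> \<Inter>(F' E E')" unfolding C_def by blast
    then show "C E \<inter> C E' \<in> Bor" using sep[OF E] bornology_subset[OF bor] by blast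
  qed
  then show ?thesis by (rule that)
qed

lemma card_le_num_ends:
  assumes bor: "bornology (carrier G) Bor" and fam: "coarsely_disjoint_family G Bor I C"
  shows "enat (card I) \<le> num_ends G Bor"
proof (cases "finite (ends G Bor)")
  case False
  then show ?thesis unfolding num_ends_def by simp
next
  case True
  have props: "\<forall>i\<in>I. coarsely_clopen G Bor (C i) \<and> C i \<notin> Bor"
    and disj: "\<forall>i\<in>I. \<forall>j\<in>I. i \<noteq> j \<longrightarrow> C i \<inter> C j \<in> Bor"
    using fam unfolding coarsely_disjoint_family_def by blast+
  have "\<exists>E. is_end G Bor E \<and> C i \<in> E" if "i \<in> I" for i
  proof -
    have "C i \<subseteq> carrier G" using props that unfolding coarsely_clopen_def by blast
    have "\<forall>A\<in>{C i}. coarsely_clopen G Bor A \<and> A \<notin> Bor" using props that by simp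
    moreover have "fin_int_unbounded (carrier G) Bor {C i}"
      unfolding fin_int_unbounded_def
    proof (intro allI impI)
      fix Fs assume "Fs \<subseteq> {C i} \<and> finite Fs"
      then have "C i \<subseteq> carrier G \<inter> \<Inter>Fs" using \<open>C i \<subseteq> carrier G\<close> by auto
      then show "carrier G \<inter> \<Inter>Fs \<notin> Bor" using props that bornology_subset[OF bor] by blast
    qed
    ultimately obtain E where "is_end G Bor E" "{C i} \<subseteq> E" by (rule is_end_extends)
    then show ?thesis by blast
  qed
  then obtain f where f: "\<And>i. i \<in> I \<Longrightarrow> is_end G Bor (f i) \<and> C i \<in> f i" by metis
  have "inj_on f I"
  proof (rule inj_onI)
    fix i j assume ij: "i \<in> I" "j \<in> I" "f i = f j"
    show "i = j"
    proof (rule ccontr)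
      assume "i \<noteq> j"
      have "fin_int_unbounded (carrier G) Bor (f i)" using f[OF ij(1)] unfolding is_end_def by simp
      moreover have "{C i, C j} \<subseteq> f i" "finite {C i, C j}" using f ij by auto
      ultimately have "carrier G \<inter> \<Inter>{C i, C j} \<notin> Bor" unfolding fin_int_unbounded_def by blast
      moreover have "carrier G \<inter> \<Inter>{C i, C j} \<subseteq> C i \<inter> C j" by auto
      ultimately show False using disj ij \<open>i \<noteq> j\<close> bornology_subset[OF bor] by blast
    qed
  qed
  moreover have "f ` I \<subseteq> ends G Bor" using f unfolding ends_def by auto
  ultimately have "card I \<le> card (ends G Bor)" using card_mono[OF True] card_image by metis
  then show ?thesis using True unfolding num_ends_def by simp
qed

lemma (in group) coarsely_disjoint_family_restrict:
  assumes bor: "bornology (carrier G) Bor" and H: "H \<subseteq> carrier G"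
    and fam: "coarsely_disjoint_family G Bor I C" and "\<forall>i\<in>I. C i \<inter> H \<notin> Bor"
  shows "coarsely_disjoint_family (G\<lparr>carrier := H\<rparr>) (induced_bornology Bor H) I (\<lambda>i. C i \<inter> H)"
  unfolding coarsely_disjoint_family_def
proof (intro conjI ballI impI)
  fix i assume "i \<in> I"
  then show "coarsely_clopen (G\<lparr>carrier := H\<rparr>) (induced_bornology Bor H) (C i \<inter> H)"
    using coarsely_clopen_restrict[OF bor H] fam unfolding coarsely_disjoint_family_def by blast
  show "C i \<inter> H \<notin> induced_bornology Bor H"
    using assms(4) \<open>i \<in> I\<close> unfolding induced_bornology_def by simp
next
  fix i j assume "i \<in> I" "j \<in> I" "i \<noteq> j"
  then have "C i \<inter> C j \<in> Bor" using fam unfolding coarsely_disjoint_family_def by blast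
  then have "C i \<inter> H \<inter> (C j \<inter> H) \<in> Bor" by (rule bornology_subset[OF bor]) blast
  then show "C i \<inter> H \<inter> (C j \<inter> H) \<in> induced_bornology Bor H"
    unfolding induced_bornology_def by blast
qed

lemma num_ends_le:
  assumes "\<And>Fe. Fe \<subseteq> ends G Bor \<Longrightarrow> finite Fe \<Longrightarrow> enat (card Fe) \<le> m"
  shows "num_ends G Bor \<le> m"
proof (cases "finite (ends G Bor)")
  case True
  then show ?thesis using assms[OF order_refl True] unfolding num_ends_def by simp
next
  case False
  show ?thesis
  proof (cases m)
    case (enat n)
    obtain Fe where "Fe \<subseteq> ends G Bor" "finite Fe" "card Fe = Suc n"
      using infinite_arbitrarily_large[OF False] by blast
    then show ?thesis using assms[of Fe] enat by simp
  qed simp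
qed

theorem theorem9p6:
  fixes G :: "('a, 'b) monoid_scheme" and Bor :: "'a set set"
    and Gs :: "nat \<Rightarrow> 'a set" and m :: enat
  assumes "large_scale_group G Bor"
    and "bg_basis G Bor Gs"
    and "\<forall>i\<ge>1. Gs i \<notin> Bor"
    and "\<forall>i\<ge>1. num_ends (G\<lparr>carrier := Gs i\<rparr>) (induced_bornology Bor (Gs i)) \<le> m"
  shows "num_ends G Bor \<le> m"
proof (rule num_ends_le)
  interpret group G using assms(1) unfolding large_scale_group_def by blast
  have bor: "bornology (carrier G) Bor" using assms(1) unfolding large_scale_group_def by blast
  fix Fe assume Fe: "Fe \<subseteq> ends G Bor" "finite Fe"
  obtain C where C: "coarsely_disjoint_family G Bor Fe C"
    using ends_coarsely_disjoint_family[OF bor _ Fe(2,1)] one_closed by blast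
  obtain j where j: "j \<ge> 1" "\<forall>E\<in>Fe. C E \<inter> Gs j \<notin> Bor"
    using bg_basis_unbounded_Int_finite[OF assms(1,2) _ finite_imageI[OF Fe(2)], of C] assms(3) C
    unfolding coarsely_disjoint_family_def by auto
  have H: "Gs j \<subseteq> carrier G" using subgroup.subset[OF bg_basis_subgroup[OF assms(2) j(1)]] .
  have "enat (card Fe) \<le> num_ends (G\<lparr>carrier := Gs j\<rparr>) (induced_bornology Bor (Gs j))"
    using card_le_num_ends[OF _ coarsely_disjoint_family_restrict[OF bor H C j(2)]]
      bornology_induced[OF bor H] by simp
  also have "\<dots> \<le> m" using assms(4) j(1) by blast
  finally show "enat (card Fe) \<le> m" .
qed

end
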